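(* Let $(U,\tau_R,\rho)$ be a general ordered topological approximation space and $A\subseteq U$. If $A$ is $R$-increasing exact, i.e. $\underline{R}_{Inc}(A)=\overline{R}^{Inc}(A)$, then $A$ is $\alpha$-increasing exact, i.e. $\underline{\alpha}_{Inc}(A)=\overline{\alpha}^{Inc}(A)$. Likewise, if $\underline{R}_{Dec}(A)=\overline{R}^{Dec}(A)$, then $\underline{\alpha}_{Dec}(A)=\overline{\alpha}^{Dec}(A)$.
   Context: A general ordered topological approximation space (GOTAS) is a triple $(U,\tau_R,\rho)$ where $U$ is a non-empty set, $R$ is a binary relation on $U$, $\tau_R$ is a topology on $U$ generated by $R$, and $\rho$ is a partial order on $U$. A subset $A\subseteq U$ is increasing (resp. decreasing) if whenever $a\in A$, $x\in U$ and $a\,\rho\,x$ (resp. $x\,\rho\,a$), then $x\in A$. For $A\subseteq U$: $\underline{R}_{Inc}(A)$ is the greatest subset of $A$ that is both $\tau_R$-open and increasing; $\underline{R}_{Dec}(A)$ is the greatest subset of $A$ that is $\tau_R$-open and decreasing; $\overline{R}^{Inc}(A)$ is the smallest superset of $A$ that is $\tau_R$-closed and increasing; $\overline{R}^{Dec}(A)$ is the smallest superset of $A$ that is $\tau_R$-closed and decreasing. Define $\underline{\alpha}_{Inc}(A)=A\cap\underline{R}_{Inc}(\overline{R}^{Inc}(\underline{R}_{Inc}(A)))$, $\overline{\alpha}^{Inc}(A)=A\cup\overline{R}^{Inc}(\underline{R}_{Inc}(\overline{R}^{Inc}(A)))$, $\underline{\alpha}_{Dec}(A)=A\cap\underline{R}_{Dec}(\overline{R}^{Dec}(\underline{R}_{Dec}(A)))$,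 $\overline{\alpha}^{Dec}(A)=A\cup\overline{R}^{Dec}(\underline{R}_{Dec}(\overline{R}^{Dec}(A)))$. *)

theory Defs
  imports "HOL-Analysis.Analysis"
begin

definition increasing_set :: "'a set \<Rightarrow> 'a rel \<Rightarrow> 'a set \<Rightarrow> bool" where
  "increasing_set U rho A \<longleftrightarrow> (\<forall>a\<in>A. \<forall>x\<in>U. (a, x) \<in> rho \<longrightarrow> x \<in> A)"

definition decreasing_set :: "'a set \<Rightarrow> 'a rel \<Rightarrow> 'a set \<Rightarrow> bool" where
  "decreasing_set U rho A \<longleftrightarrow> (\<forall>a\<in>A. \<forall>x\<in>U. (x, a) \<in> rho \<longrightarrow> x \<in> A)"

definition lowerInc :: "'a topology \<Rightarrow> 'a rel \<Rightarrow> 'a set \<Rightarrow> 'a set" where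
  "lowerInc T rho A = \<Union>{G. G \<subseteq> A \<and> openin T G \<and> increasing_set (topspace T) rho G}"

definition upperInc :: "'a topology \<Rightarrow> 'a rel \<Rightarrow> 'a set \<Rightarrow> 'a set" where
  "upperInc T rho A = \<Inter>{F. A \<subseteq> F \<and> closedin T F \<and> increasing_set (topspace T) rho F}"

definition lowerDec :: "'a topology \<Rightarrow> 'a rel \<Rightarrow> 'a set \<Rightarrow> 'a set" where
  "lowerDec T rho A = \<Union>{G. G \<subseteq> A \<and> openin T G \<and> decreasing_set (topspace T) rho G}"

definition upperDec :: "'a topology \<Rightarrow> 'a rel \<Rightarrow> 'a set \<Rightarrow> 'a set" where
  "upperDec T rho A = \<Inter>{F. A \<subseteq> F \<and> closedin T F \<and> decreasing_set (topspace T) rho F}"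

definition alpha_lowerInc :: "'a topology \<Rightarrow> 'a rel \<Rightarrow> 'a set \<Rightarrow> 'a set" where
  "alpha_lowerInc T rho A = A \<inter> lowerInc T rho (upperInc T rho (lowerInc T rho A))"

definition alpha_upperInc :: "'a topology \<Rightarrow> 'a rel \<Rightarrow> 'a set \<Rightarrow> 'a set" where
  "alpha_upperInc T rho A = A \<union> upperInc T rho (lowerInc T rho (upperInc T rho A))"

definition alpha_lowerDec :: "'a topology \<Rightarrow> 'a rel \<Rightarrow> 'a set \<Rightarrow> 'a set" where
  "alpha_lowerDec T rho A = A \<inter> lowerDec T rho (upperDec T rho (lowerDec T rho A))"

definition alpha_upperDec :: "'a topology \<Rightarrow> 'a rel \<Rightarrow> 'a set \<Rightarrow> 'a set" where
  "alpha_upperDec T rho A = A \<union> upperDec T rho (lowerDec T rho (upperDec T rho A))"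

end

theory Submission
  imports Defs
begin

text \<open>Since lower approximations shrink and upper approximations grow, an exact set coincides with
  both of its approximations; each alpha operator then reduces to its innermost set A.\<close>

lemma lowerInc_subset: "lowerInc T rho A \<subseteq> A"
  unfolding lowerInc_def by blast

lemma subset_upperInc: "A \<subseteq> upperInc T rho A"
  unfolding upperInc_def by blast

lemma lowerDec_subset: "lowerDec T rho A \<subseteq> A"
  unfolding lowerDec_def by blast

lemma subset_upperDec: "A \<subseteq> upperDec T rho A"
  unfolding upperDec_def by blast

lemma Inc_exact_eq:
  assumes "lowerInc T rho A = upperInc T rho A"
  shows "lowerInc T rho A = A" "upperInc T rho A = A"
  using assms lowerInc_subset[of T rho A] subset_upperInc[of A T rho] by auto

lemma Dec_exact_eq:
  assumes "lowerDec T rho A = upperDec T rho A"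
  shows "lowerDec T rho A = A" "upperDec T rho A = A"
  using assms lowerDec_subset[of T rho A] subset_upperDec[of A T rho] by auto

lemma alpha_Inc_exact:
  assumes "lowerInc T rho A = upperInc T rho A"
  shows "alpha_lowerInc T rho A = alpha_upperInc T rho A"
  unfolding alpha_lowerInc_def alpha_upperInc_def by (simp add: Inc_exact_eq[OF assms])

lemma alpha_Dec_exact:
  assumes "lowerDec T rho A = upperDec T rho A"
  shows "alpha_lowerDec T rho A = alpha_upperDec T rho A"
  unfolding alpha_lowerDec_def alpha_upperDec_def by (simp add: Dec_exact_eq[OF assms])

theorem proposition3p4:
  fixes U :: "'a set" and T :: "'a topology" and rho :: "'a rel" and A :: "'a set"
  assumes "U \<noteq> {}"
    and "topspace T = U"
    and "partial_order_on U rho"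
    and "A \<subseteq> U"
  shows "(lowerInc T rho A = upperInc T rho A \<longrightarrow> alpha_lowerInc T rho A = alpha_upperInc T rho A)
       \<and> (lowerDec T rho A = upperDec T rho A \<longrightarrow> alpha_lowerDec T rho A = alpha_upperDec T rho A)"
  using alpha_Inc_exact alpha_Dec_exact by blast

end
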